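(* Let $M$ be an adequate monoid, $\chi:\Sigma\to M$ a function and $\tau$ the map defined below. Suppose $\mu:X\to Y$ is a morphism of idempotent $\Sigma$-trees. Then $\tau(Y)\tau(X)=\tau(Y)$ in $M$.
   Context: Adequate monoid: a monoid $M$ whose idempotents commute and in which every $\mathcal{L}^*$-class and every $\mathcal{R}^*$-class contains an idempotent, where $a\,\mathcal{L}^*\,b$ iff ($ax=ay\Leftrightarrow bx=by$ for all $x,y\in M$) and $a\,\mathcal{R}^*\,b$ iff ($xa=ya\Leftrightarrow xb=yb$ for all $x,y\in M$); $x^+$ and $x^*$ denote the unique idempotents $\mathcal{R}^*$- and $\mathcal{L}^*$-related to $x$. Trees: a $\Sigma$-tree is a finite directed graph whose underlying undirected graph is a tree, each edge $e$ having initial vertex $\alpha(e)$, terminal vertex $\omega(e)$ and label $\lambda(e)\in\Sigma$, with distinguished start and end vertices such that there is a (possibly empty) directed path from start to end vertex; it is idempotent if start vertex equals end vertex. A morphism $X\to Y$ maps vertices to vertices and edges to edges, preserving $\alpha$, $\omega$ and $\lambda$, and maps start/end vertex of $X$ to start/end vertex of $Y$. The map $\tau$ from idempotent trees to idempotents of $M$ is defined recursively on the number of edges: if $X$ has no edges, $\tau(X)=1$. Otherwise let $v$ be its start (= end) vertex; for an edge $e$ with $\alpha(e)=v$ let $X_e$ be the connected component of $X$ with edge $e$ removed containing $\omega(e)$, viewed as an idempotent tree with start and end vertex $\omega(e)$; for an edge $e$ with $\omega(e)=v$ let $X_e$ be the component of $X$ with $e$ removed containing $\alpha(e)$, viewed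 as an idempotent tree at $\alpha(e)$. Then $\tau(X)=\prod_{e:\alpha(e)=v}[\chi(\lambda(e))\tau(X_e)]^+\cdot\prod_{e:\omega(e)=v}[\tau(X_e)\chi(\lambda(e))]^*$ (a product of commuting idempotents, independent of order). *)

theory Defs
  imports Main
begin

definition Lstar :: "'m::monoid_mult \<Rightarrow> 'm \<Rightarrow> bool" where
  "Lstar a b \<longleftrightarrow> (\<forall>x y. a * x = a * y \<longleftrightarrow> b * x = b * y)"

definition Rstar :: "'m::monoid_mult \<Rightarrow> 'm \<Rightarrow> bool" where
  "Rstar a b \<longleftrightarrow> (\<forall>x y. x * a = y * a \<longleftrightarrow> x * b = y * b)"

definition idem :: "'m::monoid_mult \<Rightarrow> bool" where
  "idem e \<longleftrightarrow> e * e = e"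

class adequate_monoid = monoid_mult +
  assumes idem_commute: "e * e = e \<Longrightarrow> f * f = f \<Longrightarrow> e * f = f * e"
      and Lstar_class_idem: "\<exists>e. e * e = e \<and> (\<forall>x y. a * x = a * y \<longleftrightarrow> e * x = e * y)"
      and Rstar_class_idem: "\<exists>e. e * e = e \<and> (\<forall>x y. x * a = y * a \<longleftrightarrow> x * e = y * e)"

text \<open>x^+ and x^*: the unique idempotents R*- resp. L*-related to x.\<close>
definition plus_idem :: "'m::adequate_monoid \<Rightarrow> 'm" where
  "plus_idem x = (THE e. idem e \<and> Rstar x e)"

definition star_idem :: "'m::adequate_monoid \<Rightarrow> 'm" where
  "star_idem x = (THE e. idem e \<and> Lstar x e)"

text \<open>Product of a finite family indexed by a set, in an arbitrary enumeration order
  (used only for families of commuting idempotents, where it is order-independent).\<close>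
definition set_prod :: "('a \<Rightarrow> 'm::monoid_mult) \<Rightarrow> 'a set \<Rightarrow> 'm" where
  "set_prod f S = prod_list (map f (SOME l. distinct l \<and> set l = S))"

record ('v, 'e, 's) stree =
  verts :: "'v set"
  edges :: "'e set"
  src :: "'e \<Rightarrow> 'v"
  tgt :: "'e \<Rightarrow> 'v"
  lab :: "'e \<Rightarrow> 's"
  start :: 'v
  fin :: 'v

definition ulink :: "('v, 'e, 's) stree \<Rightarrow> 'e set \<Rightarrow> ('v \<times> 'v) set" where
  "ulink X D = {(src X d, tgt X d) | d. d \<in> edges X - D} \<union> {(tgt X d, src X d) | d. d \<in> edges X - D}"

definition dlink :: "('v, 'e, 's) stree \<Rightarrow> ('v \<times> 'v) set" where
  "dlink X = {(src X d, tgt X d) | d. d \<in> edges X}"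

text \<open>A Sigma-tree: finite directed graph whose underlying undirected graph is a tree
  (connected, and every edge is a bridge, i.e. no cycles), with start and end vertex
  joined by a (possibly empty) directed path.\<close>
definition is_tree :: "('v, 'e, 's) stree \<Rightarrow> bool" where
  "is_tree X \<longleftrightarrow> finite (verts X) \<and> finite (edges X)
     \<and> (\<forall>e\<in>edges X. src X e \<in> verts X \<and> tgt X e \<in> verts X)
     \<and> start X \<in> verts X \<and> fin X \<in> verts X
     \<and> (\<forall>w\<in>verts X. (start X, w) \<in> (ulink X {})\<^sup>*)
     \<and> (\<forall>e\<in>edges X. (src X e, tgt X e) \<notin> (ulink X {e})\<^sup>*)
     \<and> (start X, fin X) \<in> (dlink X)\<^sup>*"

definition idempotent_tree :: "('v, 'e, 's) stree \<Rightarrow> bool" where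
  "idempotent_tree X \<longleftrightarrow> is_tree X \<and> start X = fin X"

definition tree_morphism ::
  "('v1 \<Rightarrow> 'v2) \<Rightarrow> ('e1 \<Rightarrow> 'e2) \<Rightarrow> ('v1, 'e1, 's) stree \<Rightarrow> ('v2, 'e2, 's) stree \<Rightarrow> bool" where
  "tree_morphism mv me X Y \<longleftrightarrow>
     (\<forall>v\<in>verts X. mv v \<in> verts Y)
     \<and> (\<forall>e\<in>edges X. me e \<in> edges Y
          \<and> src Y (me e) = mv (src X e) \<and> tgt Y (me e) = mv (tgt X e)
          \<and> lab Y (me e) = lab X e)
     \<and> mv (start X) = start Y \<and> mv (fin X) = fin Y"

definition subtree :: "('v, 'e, 's) stree \<Rightarrow> 'e \<Rightarrow> 'v \<Rightarrow> ('v, 'e, 's) stree" where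
  "subtree X e u =
     (let C = {w \<in> verts X. (u, w) \<in> (ulink X {e})\<^sup>*} in
      X\<lparr> verts := C, edges := {d \<in> edges X - {e}. src X d \<in> C}, start := u, fin := u \<rparr>)"

text \<open>The map tau, by recursion on the number of edges (realised with fuel).\<close>
primrec tau_f :: "('s \<Rightarrow> 'm::adequate_monoid) \<Rightarrow> nat \<Rightarrow> ('v, 'e, 's) stree \<Rightarrow> 'm" where
  "tau_f chi 0 X = 1"
| "tau_f chi (Suc n) X =
     set_prod (\<lambda>e. plus_idem (chi (lab X e) * tau_f chi n (subtree X e (tgt X e))))
              {e \<in> edges X. src X e = start X}
   * set_prod (\<lambda>e. star_idem (tau_f chi n (subtree X e (src X e)) * chi (lab X e)))
              {e \<in> edges X. tgt X e = start X}"

definition tau :: "('s \<Rightarrow> 'm::adequate_monoid) \<Rightarrow> ('v, 'e, 's) stree \<Rightarrow> 'm" where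
  "tau chi X = tau_f chi (card (edges X)) X"

end

theory Submission
  imports Defs
begin

text \<open>Induction on the number of edges of X. Since tau(X) is the product of the idempotents
  (chi(e) tau(X_e))^+ and (tau(X_e) chi(e))^* over the edges e at the root, it suffices that
  tau(Y) absorbs each of them. For an edge e leaving the root, f = mu(e) leaves the root of Y,
  and with a = chi(f) and s, t the values of tau on the two components of Y without f one has
  tau(Y) = (a t)^+ s, while tau of Y rerooted at the other end of f is T = (s a)^* t. The
  induction hypothesis for X_e mapped into this rerooted Y gives T tau(X_e) = T, and an identity
  valid in every adequate monoid turns this into (a t)^+ s (a tau(X_e))^+ = (a t)^+ s.
  Edges entering the root are dual.\<close>

section \<open>Adequate monoids\<close>

lemma idem_mult_idem:
  fixes e f :: "'m::monoid_mult"
  assumes "e * e = e" "f * f = f" "e * f = f * e"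
  shows "(e * f) * (e * f) = e * f"
proof -
  have "(e * f) * (e * f) = e * ((f * e) * f)" by (simp add: mult.assoc)
  also have "\<dots> = e * ((e * f) * f)" using assms(3) by simp
  also have "\<dots> = (e * e) * (f * f)" by (simp add: mult.assoc)
  finally show ?thesis using assms(1,2) by simp
qed

lemma plus_idem_eqI:
  fixes x e :: "'m::adequate_monoid"
  assumes e: "e * e = e" "\<forall>a b. a * x = b * x \<longleftrightarrow> a * e = b * e"
  shows "plus_idem x = e"
  unfolding plus_idem_def
proof (rule the_equality)
  show "idem e \<and> Rstar x e" using e by (simp add: idem_def Rstar_def)
next
  fix e' assume "idem e' \<and> Rstar x e'"
  then have e': "e' * e' = e'" "\<forall>a b. a * x = b * x \<longleftrightarrow> a * e' = b * e'"
    by (simp_all add: idem_def Rstar_def)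
  have "e' * x = 1 * x" using e' by (metis mult_1_left)
  then have "e' * e = e" using e by (metis mult_1_left)
  have "e * x = 1 * x" using e by (metis mult_1_left)
  then have "e * e' = e'" using e' by (metis mult_1_left)
  show "e' = e" using \<open>e' * e = e\<close> \<open>e * e' = e'\<close> idem_commute[OF e(1) e'(1)] by simp
qed

lemma star_idem_eqI:
  fixes x e :: "'m::adequate_monoid"
  assumes e: "e * e = e" "\<forall>a b. x * a = x * b \<longleftrightarrow> e * a = e * b"
  shows "star_idem x = e"
  unfolding star_idem_def
proof (rule the_equality)
  show "idem e \<and> Lstar x e" using e by (simp add: idem_def Lstar_def)
next
  fix e' assume "idem e' \<and> Lstar x e'"
  then have e': "e' * e' = e'" "\<forall>a b. x * a = x * b \<longleftrightarrow> e' * a = e' * b"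
    by (simp_all add: idem_def Lstar_def)
  have "x * e' = x * 1" using e' by (metis mult_1_right)
  then have "e * e' = e" using e by (metis mult_1_right)
  have "x * e = x * 1" using e by (metis mult_1_right)
  then have "e' * e = e'" using e' by (metis mult_1_right)
  show "e' = e" using \<open>e' * e = e'\<close> \<open>e * e' = e\<close> idem_commute[OF e(1) e'(1)] by simp
qed

lemma plus_idem_Rstar:
  fixes x :: "'m::adequate_monoid"
  shows "plus_idem x * plus_idem x = plus_idem x"
    and "a * x = b * x \<longleftrightarrow> a * plus_idem x = b * plus_idem x"
proof -
  obtain e :: 'm where e: "e * e = e" "\<forall>a b. a * x = b * x \<longleftrightarrow> a * e = b * e"
    using Rstar_class_idem by blast
  with plus_idem_eqI[OF e] show "plus_idem x * plus_idem x = plus_idem x"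
    and "a * x = b * x \<longleftrightarrow> a * plus_idem x = b * plus_idem x" by simp_all
qed

lemma star_idem_Lstar:
  fixes x :: "'m::adequate_monoid"
  shows "star_idem x * star_idem x = star_idem x"
    and "x * a = x * b \<longleftrightarrow> star_idem x * a = star_idem x * b"
proof -
  obtain e :: 'm where e: "e * e = e" "\<forall>a b. x * a = x * b \<longleftrightarrow> e * a = e * b"
    using Lstar_class_idem by blast
  with star_idem_eqI[OF e] show "star_idem x * star_idem x = star_idem x"
    and "x * a = x * b \<longleftrightarrow> star_idem x * a = star_idem x * b" by simp_all
qed

lemmas plus_idem_idem = plus_idem_Rstar(1)
lemmas star_idem_idem = star_idem_Lstar(1)

lemma plus_idem_mult_self: "plus_idem x * x = (x::'m::adequate_monoid)"
  using plus_idem_Rstar(2)[of "plus_idem x" x 1, THEN iffD2] plus_idem_idem[of x] by simp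

lemma mult_star_idem_self: "x * star_idem x = (x::'m::adequate_monoid)"
  using star_idem_Lstar(2)[of x "star_idem x" 1, THEN iffD2] star_idem_idem[of x] by simp

lemma plus_idem_idem_mult:
  fixes e x :: "'m::adequate_monoid"
  assumes e: "e * e = e"
  shows "plus_idem (e * x) = e * plus_idem x"
proof -
  let ?p = "plus_idem (e * x)" and ?q = "e * plus_idem x"
  have c: "e * plus_idem x = plus_idem x * e" using idem_commute[OF e plus_idem_idem] .
  have q: "?q * ?q = ?q" using idem_mult_idem[OF e plus_idem_idem c] .
  have "?q * (e * x) = e * ((plus_idem x * e) * x)" by (simp add: mult.assoc)
  also have "\<dots> = e * ((e * plus_idem x) * x)" using c by simp
  also have "\<dots> = (e * e) * (plus_idem x * x)" by (simp add: mult.assoc)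
  finally have "?q * (e * x) = 1 * (e * x)" using e plus_idem_mult_self[of x] by simp
  then have "?q * ?p = 1 * ?p" by (rule plus_idem_Rstar(2)[THEN iffD1])
  then have qp: "?q * ?p = ?p" by simp
  have "(?p * e) * x = e * x" using plus_idem_mult_self[of "e * x"] by (simp add: mult.assoc)
  then have "(?p * e) * plus_idem x = e * plus_idem x"
    by (rule plus_idem_Rstar(2)[THEN iffD1])
  then have pq: "?p * ?q = ?q" by (simp add: mult.assoc)
  show ?thesis using qp pq idem_commute[OF plus_idem_idem q] by metis
qed

lemma star_idem_mult_idem:
  fixes e x :: "'m::adequate_monoid"
  assumes e: "e * e = e"
  shows "star_idem (x * e) = star_idem x * e"
proof -
  let ?p = "star_idem (x * e)" and ?q = "star_idem x * e"
  have c: "star_idem x * e = e * star_idem x" using idem_commute[OF star_idem_idem e] .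
  have q: "?q * ?q = ?q" using idem_mult_idem[OF star_idem_idem e c] .
  have "(x * e) * ?q = x * ((e * star_idem x) * e)" by (simp add: mult.assoc)
  also have "\<dots> = x * ((star_idem x * e) * e)" using c by simp
  also have "\<dots> = (x * star_idem x) * (e * e)" by (simp add: mult.assoc)
  finally have "(x * e) * ?q = (x * e) * 1" using e mult_star_idem_self[of x] by simp
  then have "?p * ?q = ?p * 1" by (rule star_idem_Lstar(2)[THEN iffD1])
  then have pq: "?p * ?q = ?p" by simp
  have "x * (e * ?p) = x * e" using mult_star_idem_self[of "x * e"] by (simp add: mult.assoc)
  then have "star_idem x * (e * ?p) = star_idem x * e"
    by (rule star_idem_Lstar(2)[THEN iffD1])
  then have qp: "?q * ?p = ?q" by (simp add: mult.assoc)
  show ?thesis using qp pq idem_commute[OF star_idem_idem q] by metis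
qed

lemma plus_idem_mult_plus_idem: "plus_idem (x * y) * plus_idem x = plus_idem ((x::'m::adequate_monoid) * y)"
proof -
  have "plus_idem x * (x * y) = 1 * (x * y)"
    using plus_idem_mult_self[of x] by (simp add: mult.assoc[symmetric])
  then have "plus_idem x * plus_idem (x * y) = 1 * plus_idem (x * y)"
    by (rule plus_idem_Rstar(2)[THEN iffD1])
  then show ?thesis using idem_commute[OF plus_idem_idem plus_idem_idem] by (metis mult_1_left)
qed

lemma star_idem_mult_star_idem: "star_idem (y * x) * star_idem x = star_idem (y * (x::'m::adequate_monoid))"
proof -
  have "(y * x) * star_idem x = (y * x) * 1" using mult_star_idem_self[of x] by (simp add: mult.assoc)
  then have "star_idem (y * x) * star_idem x = star_idem (y * x) * 1"
    by (rule star_idem_Lstar(2)[THEN iffD1])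
  then show ?thesis by simp
qed

section \<open>Products of commuting idempotents\<close>

lemma prod_list_map_idem:
  assumes "\<And>z. f z * f z = (f z::'m::adequate_monoid)"
  shows "prod_list (map f l) * prod_list (map f l) = prod_list (map f l)"
proof (induction l)
  case Nil then show ?case by simp
next
  case (Cons a l)
  show ?case using idem_mult_idem[OF assms Cons.IH idem_commute[OF assms Cons.IH]] by simp
qed

lemma prod_list_map_remove1:
  assumes "\<And>z. f z * f z = (f z::'m::adequate_monoid)" "y \<in> set l"
  shows "prod_list (map f l) = f y * prod_list (map f (remove1 y l))"
  using assms(2)
proof (induction l)
  case Nil then show ?case by simp
next
  case (Cons a l)
  show ?case
  proof (cases "a = y")
    case True then show ?thesis by simp
  next
    case False
    then have "prod_list (map f (a # l)) = (f a * f y) * prod_list (map f (remove1 y l))"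
      using Cons by (simp add: mult.assoc)
    also have "\<dots> = (f y * f a) * prod_list (map f (remove1 y l))"
      by (simp only: idem_commute[OF assms(1) assms(1)])
    finally show ?thesis using False by (simp add: mult.assoc)
  qed
qed

lemma prod_list_map_perm:
  assumes "\<And>z. f z * f z = (f z::'m::adequate_monoid)"
  shows "distinct l1 \<Longrightarrow> distinct l2 \<Longrightarrow> set l1 = set l2 \<Longrightarrow> prod_list (map f l1) = prod_list (map f l2)"
proof (induction l1 arbitrary: l2)
  case Nil then show ?case by simp
next
  case (Cons a l1)
  have "prod_list (map f l1) = prod_list (map f (remove1 a l2))"
    using Cons by (intro Cons.IH) (auto simp: set_remove1_eq)
  moreover have "a \<in> set l2" using Cons.prems by auto
  ultimately show ?case using prod_list_map_remove1[where f=f, OF assms, of a l2] by simp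
qed

lemma set_prod_eq_prod_list:
  assumes "\<And>z. f z * f z = (f z::'m::adequate_monoid)" "distinct l" "set l = S"
  shows "set_prod f S = prod_list (map f l)"
proof -
  let ?l = "SOME l. distinct l \<and> set l = S"
  have "distinct ?l \<and> set ?l = S" using someI_ex[of "\<lambda>l. distinct l \<and> set l = S"] assms by blast
  then show ?thesis unfolding set_prod_def using prod_list_map_perm[where f=f, OF assms(1), of ?l l] assms by simp
qed

lemma set_prod_empty: "set_prod f {} = (1::'m::monoid_mult)"
proof -
  have "(SOME l. distinct l \<and> set l = {}) = []" by (rule some_equality) auto
  then show ?thesis unfolding set_prod_def by (subst \<open>(SOME l. distinct l \<and> set l = {}) = []\<close>) simp
qed

lemma set_prod_insert:
  assumes "\<And>z. f z * f z = (f z::'m::adequate_monoid)" "finite S" "x \<notin> S"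
  shows "set_prod f (insert x S) = f x * set_prod f S"
proof -
  obtain l where l: "distinct l" "set l = S" using finite_distinct_list[OF assms(2)] by blast
  have "set_prod f (insert x S) = prod_list (map f (x # l))"
    by (rule set_prod_eq_prod_list[OF assms(1)]) (use l assms(3) in auto)
  then show ?thesis using set_prod_eq_prod_list[OF assms(1) l] by simp
qed

lemma set_prod_idem:
  assumes "\<And>z. f z * f z = (f z::'m::adequate_monoid)"
  shows "set_prod f S * set_prod f S = set_prod f S"
  unfolding set_prod_def using prod_list_map_idem[where f=f, OF assms] by blast

lemma set_prod_some_list:
  assumes "finite S"
  shows "set (SOME l. distinct l \<and> set l = S) = S"
  using someI_ex[of "\<lambda>l. distinct l \<and> set l = S"] finite_distinct_list[OF assms] by blast

lemma set_prod_cong: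
  assumes "finite S" "\<And>x. x \<in> S \<Longrightarrow> f x = g x"
  shows "set_prod f S = (set_prod g S :: 'm::monoid_mult)"
  unfolding set_prod_def using set_prod_some_list[OF assms(1)] assms(2)
  by (metis (no_types, lifting) map_eq_conv)

lemma prod_list_map_absorb:
  "(\<And>x. x \<in> set l \<Longrightarrow> p * f x = p) \<Longrightarrow> p * prod_list (map f l) = (p :: 'm::monoid_mult)"
  by (induction l) (simp_all add: mult.assoc[symmetric])

lemma set_prod_absorb:
  assumes "finite S" "\<And>x. x \<in> S \<Longrightarrow> p * f x = p"
  shows "p * set_prod f S = (p :: 'm::monoid_mult)"
  unfolding set_prod_def using set_prod_some_list[OF assms(1)] assms(2)
  by (intro prod_list_map_absorb) blast

section \<open>Two absorption identities\<close>

text \<open>With T = (s a)^* t one has s (a T)^+ = s (a t)^+, while T x = T gives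
  (a T)^+ (a x)^+ = (a T)^+; hence (a x)^+ is absorbed by (a t)^+ s.\<close>
lemma plus_factor_absorb:
  fixes s t x a :: "'m::adequate_monoid"
  assumes s: "s * s = s" and t: "t * t = t" and x: "x * x = x"
    and Tx: "(star_idem (s * a) * t) * x = star_idem (s * a) * t"
  shows "(plus_idem (a * t) * s) * plus_idem (a * x) = plus_idem (a * t) * s"
proof -
  define T where "T = star_idem (s * a) * t"
  let ?u = "plus_idem (a * T)" and ?p = "plus_idem (a * t) * s"
  have "s * ?u = plus_idem (s * (a * T))" using plus_idem_idem_mult[OF s] by simp
  also have "s * (a * T) = ((s * a) * star_idem (s * a)) * t" by (simp add: T_def mult.assoc)
  also have "\<dots> = s * (a * t)" using mult_star_idem_self[of "s * a"] by (simp add: mult.assoc)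
  finally have "s * ?u = s * plus_idem (a * t)" using plus_idem_idem_mult[OF s] by simp
  also have "\<dots> = plus_idem (a * t) * s" using idem_commute[OF s plus_idem_idem] .
  finally have su: "s * ?u = plus_idem (a * t) * s" .
  have pu: "?p * ?u = ?p"
  proof -
    have "?p * ?u = plus_idem (a * t) * (plus_idem (a * t) * s)" using su by (simp add: mult.assoc)
    also have "\<dots> = ?p" using plus_idem_idem[of "a * t"] by (simp add: mult.assoc[symmetric])
    finally show ?thesis .
  qed
  have T: "T * T = T" unfolding T_def
    by (rule idem_mult_idem[OF star_idem_idem t idem_commute[OF star_idem_idem t]])
  have "x * T = T" using idem_commute[OF T x] Tx by (simp add: T_def)
  then have "a * T = (a * x) * T" by (simp add: mult.assoc)
  then have ux: "?u * plus_idem (a * x) = ?u" using plus_idem_mult_plus_idem[of "a * x" T] by simp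
  have "?p * plus_idem (a * x) = (?p * ?u) * plus_idem (a * x)" using pu by simp
  also have "\<dots> = ?p * (?u * plus_idem (a * x))" by (simp only: mult.assoc)
  also have "\<dots> = ?p" by (simp only: ux pu)
  finally show ?thesis .
qed

lemma star_factor_absorb:
  fixes s t x a :: "'m::adequate_monoid"
  assumes s: "s * s = s" and t: "t * t = t"
    and Tx: "(plus_idem (a * s) * t) * x = plus_idem (a * s) * t"
  shows "(star_idem (t * a) * s) * star_idem (x * a) = star_idem (t * a) * s"
proof -
  define T where "T = plus_idem (a * s) * t"
  let ?u = "star_idem (T * a)" and ?p = "star_idem (t * a) * s"
  have "?u * s = star_idem ((T * a) * s)" using star_idem_mult_idem[OF s] by simp
  also have "(T * a) * s = (plus_idem (a * s) * t) * (a * s)" by (simp add: T_def mult.assoc)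
  also have "\<dots> = (t * plus_idem (a * s)) * (a * s)" using idem_commute[OF plus_idem_idem t] by simp
  also have "\<dots> = (t * a) * s" using plus_idem_mult_self[of "a * s"] by (simp add: mult.assoc)
  finally have us: "?u * s = ?p" using star_idem_mult_idem[OF s] by simp
  have pu: "?p * ?u = ?p"
  proof -
    have "?p * ?u = star_idem (t * a) * (?u * s)"
      using idem_commute[OF s star_idem_idem] by (simp add: mult.assoc)
    also have "\<dots> = ?p" using us star_idem_idem[of "t * a"] by (simp add: mult.assoc[symmetric])
    finally show ?thesis .
  qed
  have "T * (x * a) = T * a" using Tx by (simp add: T_def mult.assoc[symmetric])
  then have ux: "?u * star_idem (x * a) = ?u" using star_idem_mult_star_idem[of T "x * a"] by simp
  have "?p * star_idem (x * a) = (?p * ?u) * star_idem (x * a)" using pu by simp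
  also have "\<dots> = ?p * (?u * star_idem (x * a))" by (simp only: mult.assoc)
  also have "\<dots> = ?p" by (simp only: ux pu)
  finally show ?thesis .
qed

section \<open>Unfolding tau at the root\<close>

lemma tau_f_idem: "tau_f chi n Z * tau_f chi n Z = (tau_f chi n Z :: 'm::adequate_monoid)"
proof (induction n arbitrary: Z)
  case 0 then show ?case by simp
next
  case (Suc n)
  let ?A = "set_prod (\<lambda>e. plus_idem (chi (lab Z e) * tau_f chi n (subtree Z e (tgt Z e))))
              {e \<in> edges Z. src Z e = start Z}"
  let ?B = "set_prod (\<lambda>e. star_idem (tau_f chi n (subtree Z e (src Z e)) * chi (lab Z e)))
              {e \<in> edges Z. tgt Z e = start Z}"
  have a: "?A * ?A = ?A" by (rule set_prod_idem) (rule plus_idem_idem)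
  have b: "?B * ?B = ?B" by (rule set_prod_idem) (rule star_idem_idem)
  show ?case using idem_mult_idem[OF a b idem_commute[OF a b]] by simp
qed

lemma tau_idem: "tau chi Z * tau chi Z = (tau chi Z :: 'm::adequate_monoid)"
  unfolding tau_def by (rule tau_f_idem)

lemma subtree_simps:
  "verts (subtree X e u) = {w \<in> verts X. (u, w) \<in> (ulink X {e})\<^sup>*}"
  "edges (subtree X e u) = {d \<in> edges X - {e}. src X d \<in> verts X \<and> (u, src X d) \<in> (ulink X {e})\<^sup>*}"
  "src (subtree X e u) = src X" "tgt (subtree X e u) = tgt X" "lab (subtree X e u) = lab X"
  "start (subtree X e u) = u" "fin (subtree X e u) = u"
  "stree.more (subtree X e u) = stree.more X"
  by (simp_all add: subtree_def Let_def)

lemma subtree_reroot: "subtree (Z\<lparr>start := a, fin := b\<rparr>) d u = subtree Z d u"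
  by (simp add: subtree_def ulink_def Let_def)

lemma card_edges_subtree_less:
  assumes "finite (edges X)" "e \<in> edges X"
  shows "finite (edges (subtree X e u))" "card (edges (subtree X e u)) < card (edges X)"
proof -
  have sub: "edges (subtree X e u) \<subseteq> edges X - {e}" by (auto simp: subtree_simps)
  then show "finite (edges (subtree X e u))" using assms(1) finite_subset by blast
  have "card (edges (subtree X e u)) \<le> card (edges X - {e})" using sub assms(1) by (simp add: card_mono)
  also have "\<dots> < card (edges X)" by (rule card_Diff1_less[OF assms])
  finally show "card (edges (subtree X e u)) < card (edges X)" .
qed

lemma tau_f_fuel_indep:
  "finite (edges Z) \<Longrightarrow> card (edges Z) \<le> n \<Longrightarrow> card (edges Z) \<le> m \<Longrightarrow>
   tau_f chi n Z = (tau_f chi m Z :: 'm::adequate_monoid)"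
proof (induction n arbitrary: Z m)
  case 0
  then show ?case by (cases m) (simp_all add: set_prod_empty)
next
  case (Suc n)
  show ?case
  proof (cases m)
    case 0
    then show ?thesis using Suc.prems by (simp add: set_prod_empty)
  next
    case (Suc m')
    have IH: "tau_f chi n (subtree Z e u) = tau_f chi m' (subtree Z e u)" if "e \<in> edges Z" for e u
      using card_edges_subtree_less[OF Suc.prems(1) that, where u = u] Suc.IH Suc.prems \<open>m = Suc m'\<close> by simp
    show ?thesis unfolding \<open>m = Suc m'\<close> tau_f.simps
      using Suc.prems(1) IH by (intro arg_cong2[where f = "(*)"] set_prod_cong) simp_all
  qed
qed

lemma tau_f_eq_tau:
  "finite (edges Z) \<Longrightarrow> card (edges Z) \<le> n \<Longrightarrow> tau_f chi n Z = (tau chi Z :: 'm::adequate_monoid)"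
  unfolding tau_def using tau_f_fuel_indep by blast

definition out_factor :: "('s \<Rightarrow> 'm::adequate_monoid) \<Rightarrow> ('v, 'e, 's) stree \<Rightarrow> 'e \<Rightarrow> 'm" where
  "out_factor chi Z d = plus_idem (chi (lab Z d) * tau chi (subtree Z d (tgt Z d)))"

definition in_factor :: "('s \<Rightarrow> 'm::adequate_monoid) \<Rightarrow> ('v, 'e, 's) stree \<Rightarrow> 'e \<Rightarrow> 'm" where
  "in_factor chi Z d = star_idem (tau chi (subtree Z d (src Z d)) * chi (lab Z d))"

lemma out_factor_idem: "out_factor chi Z d * out_factor chi Z d = out_factor chi Z d"
  unfolding out_factor_def by (rule plus_idem_idem)

lemma in_factor_idem: "in_factor chi Z d * in_factor chi Z d = in_factor chi Z d"
  unfolding in_factor_def by (rule star_idem_idem)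

lemma out_factor_reroot: "out_factor chi (Z\<lparr>start := a, fin := b\<rparr>) = out_factor chi Z"
  by (rule ext) (simp add: out_factor_def subtree_reroot)

lemma in_factor_reroot: "in_factor chi (Z\<lparr>start := a, fin := b\<rparr>) = in_factor chi Z"
  by (rule ext) (simp add: in_factor_def subtree_reroot)

lemma tau_unfold:
  assumes "finite (edges Z)"
  shows "tau chi Z = set_prod (out_factor chi Z) {d \<in> edges Z. src Z d = start Z}
                    * set_prod (in_factor chi Z) {d \<in> edges Z. tgt Z d = start Z}"
proof (cases "card (edges Z)")
  case 0
  then show ?thesis using assms by (simp add: tau_def set_prod_empty)
next
  case (Suc n)
  have IH: "tau_f chi n (subtree Z e u) = tau chi (subtree Z e u)" if "e \<in> edges Z" for e u
    using card_edges_subtree_less[OF assms that, where u = u] Suc by (intro tau_f_eq_tau) auto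
  show ?thesis unfolding tau_def Suc tau_f.simps
    using assms IH by (intro arg_cong2[where f = "(*)"] set_prod_cong)
      (simp_all add: out_factor_def in_factor_def)
qed

section \<open>Components of trees\<close>

lemma ulink_sym: "(a, b) \<in> ulink X D \<Longrightarrow> (b, a) \<in> ulink X D"
  by (auto simp: ulink_def)

lemma rtrancl_ulink_sym: "(a, b) \<in> (ulink X D)\<^sup>* \<Longrightarrow> (b, a) \<in> (ulink X D)\<^sup>*"
  by (induction rule: rtrancl_induct) (auto intro: converse_rtrancl_into_rtrancl ulink_sym)

lemma ulink_antimono: "D \<subseteq> D' \<Longrightarrow> ulink X D' \<subseteq> ulink X D"
  by (auto simp: ulink_def)

lemma ulink_edge:
  "d \<in> edges X \<Longrightarrow> d \<notin> D \<Longrightarrow> (src X d, tgt X d) \<in> ulink X D \<and> (tgt X d, src X d) \<in> ulink X D"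
  by (auto simp: ulink_def)

lemma ulinkE:
  assumes "(a, b) \<in> ulink X D"
  obtains d where "d \<in> edges X" "d \<notin> D" "(a = src X d \<and> b = tgt X d) \<or> (a = tgt X d \<and> b = src X d)"
  using assms by (auto simp: ulink_def)

lemma ulink_mono_edges:
  "edges A \<subseteq> edges B \<Longrightarrow> src A = src B \<Longrightarrow> tgt A = tgt B \<Longrightarrow> ulink A D \<subseteq> ulink B D"
  by (auto simp: ulink_def)

lemma ulink_reroot: "ulink (Z\<lparr>start := a, fin := b\<rparr>) D = ulink Z D"
  by (simp add: ulink_def)

lemma ulink_subtree_subset: "ulink (subtree X e u) D \<subseteq> ulink X D"
  by (rule ulink_mono_edges) (auto simp: subtree_simps)

lemma is_treeD:
  assumes "is_tree X"
  shows "finite (verts X)" "finite (edges X)"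
    "\<And>e. e \<in> edges X \<Longrightarrow> src X e \<in> verts X" "\<And>e. e \<in> edges X \<Longrightarrow> tgt X e \<in> verts X"
    "\<And>w. w \<in> verts X \<Longrightarrow> (start X, w) \<in> (ulink X {})\<^sup>*"
    "\<And>e. e \<in> edges X \<Longrightarrow> (src X e, tgt X e) \<notin> (ulink X {e})\<^sup>*"
  using assms unfolding is_tree_def by blast+

lemma tree_edge_bridge:
  assumes "is_tree X" "g \<in> edges X"
  shows "(src X g, tgt X g) \<notin> (ulink X {g})\<^sup>*" "(tgt X g, src X g) \<notin> (ulink X {g})\<^sup>*"
    "src X g \<noteq> tgt X g"
proof -
  show a: "(src X g, tgt X g) \<notin> (ulink X {g})\<^sup>*" using is_treeD(6)[OF assms] .
  then show "(tgt X g, src X g) \<notin> (ulink X {g})\<^sup>*" using rtrancl_ulink_sym by metis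
  show "src X g \<noteq> tgt X g" using a by (metis rtrancl.rtrancl_refl)
qed

lemma idempotent_tree_subtree:
  assumes X: "is_tree X" and e: "e \<in> edges X" and u: "u \<in> verts X"
  shows "idempotent_tree (subtree X e u)"
proof -
  let ?S = "subtree X e u"
  have conn: "(u, w) \<in> (ulink ?S {})\<^sup>*" if "(u, w) \<in> (ulink X {e})\<^sup>*" for w
    using that
  proof (induction rule: rtrancl_induct)
    case (step y z)
    from step.hyps(2) obtain d where d: "d \<in> edges X" "d \<noteq> e"
      "(y = src X d \<and> z = tgt X d) \<or> (y = tgt X d \<and> z = src X d)"
      by (rule ulinkE) auto
    have "(u, src X d) \<in> (ulink X {e})\<^sup>*" using d(3) step.hyps by auto
    then have "d \<in> edges ?S" using d is_treeD(3)[OF X] by (simp add: subtree_simps)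
    then have "(y, z) \<in> ulink ?S {}" using ulink_edge[of d ?S "{}"] d(3) by (auto simp: subtree_simps)
    then show ?case using step.IH by simp
  qed simp
  have "is_tree ?S"
    unfolding is_tree_def
  proof (intro conjI ballI)
    show "finite (verts ?S)" "finite (edges ?S)" using is_treeD(1,2)[OF X] by (simp_all add: subtree_simps)
    fix d assume "d \<in> edges ?S"
    then have d: "d \<in> edges X" "d \<noteq> e" "(u, src X d) \<in> (ulink X {e})\<^sup>*" by (auto simp: subtree_simps)
    show "src ?S d \<in> verts ?S" using d is_treeD(3)[OF X] by (simp add: subtree_simps)
    have "(src X d, tgt X d) \<in> ulink X {e}" using ulink_edge[of d X "{e}"] d by blast
    then have "(u, tgt X d) \<in> (ulink X {e})\<^sup>*" using d(3) by simp
    then show "tgt ?S d \<in> verts ?S" using is_treeD(4)[OF X d(1)] by (simp add: subtree_simps)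
    have "(ulink ?S {d})\<^sup>* \<subseteq> (ulink X {d})\<^sup>*" by (rule rtrancl_mono[OF ulink_subtree_subset])
    then show "(src ?S d, tgt ?S d) \<notin> (ulink ?S {d})\<^sup>*"
      using is_treeD(6)[OF X d(1)] by (auto simp: subtree_simps)
  next
    fix w assume "w \<in> verts ?S"
    then show "(start ?S, w) \<in> (ulink ?S {})\<^sup>*" using conn by (simp add: subtree_simps)
  qed (use u in \<open>simp_all add: subtree_simps\<close>)
  then show ?thesis by (simp add: idempotent_tree_def subtree_simps)
qed

lemma idempotent_tree_reroot:
  assumes Y: "is_tree Y" and w: "w \<in> verts Y"
  shows "idempotent_tree (Y\<lparr>start := w, fin := w\<rparr>)"
proof -
  let ?Z = "Y\<lparr>start := w, fin := w\<rparr>"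
  have "is_tree ?Z" unfolding is_tree_def
  proof (intro conjI ballI)
    fix z assume "z \<in> verts ?Z"
    then show "(start ?Z, z) \<in> (ulink ?Z {})\<^sup>*"
      using rtrancl_ulink_sym[OF is_treeD(5)[OF Y w]] is_treeD(5)[OF Y, of z]
      by (simp add: ulink_reroot)
  qed (use Y w in \<open>auto dest: is_treeD simp: ulink_reroot\<close>)
  then show ?thesis by (simp add: idempotent_tree_def)
qed

lemma tree_morphism_subtree_reroot:
  assumes "tree_morphism mv me X Y" and "u \<in> verts X"
  shows "tree_morphism mv me (subtree X e u) (Y\<lparr>start := mv u, fin := mv u\<rparr>)"
proof -
  have "verts (subtree X e u) \<subseteq> verts X" "edges (subtree X e u) \<subseteq> edges X"
    by (auto simp: subtree_simps)
  then show ?thesis using assms unfolding tree_morphism_def by (auto simp: subtree_simps)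
qed

lemma rtrancl_ulink_avoid_edge:
  assumes xz: "(x, z) \<notin> (ulink Y {g})\<^sup>*" and z: "z = src Y f \<or> z = tgt Y f"
    and "(x, y) \<in> (ulink Y {g})\<^sup>*"
  shows "(x, y) \<in> (ulink Y {g, f})\<^sup>*"
  using assms(3)
proof (induction rule: rtrancl_induct)
  case (step y y')
  from step.hyps(2) obtain d where d: "d \<in> edges Y" "d \<noteq> g"
    "(y = src Y d \<and> y' = tgt Y d) \<or> (y = tgt Y d \<and> y' = src Y d)"
    by (rule ulinkE) auto
  have "(x, y') \<in> (ulink Y {g})\<^sup>*" using step.hyps by simp
  then have "d \<noteq> f" using d(3) z xz step.hyps(1) by auto
  then have "(y, y') \<in> ulink Y {g, f}" using d ulink_edge[of d Y "{g, f}"] by auto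
  then show ?case using step.IH by simp
qed simp

lemma rtrancl_ulink_subtree:
  assumes Y: "is_tree Y" and zx: "(z, x) \<in> (ulink Y {f})\<^sup>*"
    and "(x, y) \<in> (ulink Y {g, f})\<^sup>*"
  shows "(x, y) \<in> (ulink (subtree Y f z) {g})\<^sup>*"
  using assms(3)
proof (induction rule: rtrancl_induct)
  case (step y y')
  from step.hyps(2) obtain d where d: "d \<in> edges Y" "d \<notin> {g, f}"
    "(y = src Y d \<and> y' = tgt Y d) \<or> (y = tgt Y d \<and> y' = src Y d)"
    by (rule ulinkE)
  have "(ulink Y {g, f})\<^sup>* \<subseteq> (ulink Y {f})\<^sup>*" by (rule rtrancl_mono[OF ulink_antimono]) auto
  then have "(z, y) \<in> (ulink Y {f})\<^sup>*" "(z, y') \<in> (ulink Y {f})\<^sup>*"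
    using zx step.hyps by (meson rtrancl_trans rtrancl.rtrancl_into_rtrancl subsetD)+
  then have "d \<in> edges (subtree Y f z)" using d is_treeD(3)[OF Y] by (auto simp: subtree_simps)
  then have "(y, y') \<in> ulink (subtree Y f z) {g}"
    using ulink_edge[of d "subtree Y f z" "{g}"] d by (auto simp: subtree_simps)
  then show ?case using step.IH by simp
qed simp

lemma subtree_subtree:
  assumes Y: "is_tree Y" and g: "g \<in> edges Y" and gf: "g \<noteq> f"
    and z: "z = src Y f \<or> z = tgt Y f"
    and zx: "(z = src Y g \<and> x = tgt Y g) \<or> (z = tgt Y g \<and> x = src Y g)"
  shows "subtree (subtree Y f z) g x = subtree Y g x"
proof -
  let ?Y1 = "subtree Y f z"
  have xz: "(x, z) \<notin> (ulink Y {g})\<^sup>*" using tree_edge_bridge(1,2)[OF Y g] zx by auto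
  have "(z, x) \<in> ulink Y {f}" using ulink_edge[OF g, of "{f}"] gf zx by auto
  then have zx': "(z, x) \<in> (ulink Y {f})\<^sup>*" by simp
  have reach: "(z, w) \<in> (ulink Y {f})\<^sup>* \<and> (x, w) \<in> (ulink ?Y1 {g})\<^sup>*"
    if "(x, w) \<in> (ulink Y {g})\<^sup>*" for w
  proof
    have xw: "(x, w) \<in> (ulink Y {g, f})\<^sup>*" by (rule rtrancl_ulink_avoid_edge[OF xz z that])
    have "(ulink Y {g, f})\<^sup>* \<subseteq> (ulink Y {f})\<^sup>*" by (rule rtrancl_mono[OF ulink_antimono]) auto
    then show "(z, w) \<in> (ulink Y {f})\<^sup>*" using zx' xw by (meson rtrancl_trans subsetD)
    show "(x, w) \<in> (ulink ?Y1 {g})\<^sup>*" by (rule rtrancl_ulink_subtree[OF Y zx' xw])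
  qed
  have sub: "(ulink ?Y1 {g})\<^sup>* \<subseteq> (ulink Y {g})\<^sup>*" by (rule rtrancl_mono[OF ulink_subtree_subset])
  have V: "verts (subtree ?Y1 g x) = verts (subtree Y g x)"
    using sub reach by (auto simp: subtree_simps)
  have "d \<in> edges (subtree ?Y1 g x)" if "d \<in> edges (subtree Y g x)" for d
  proof -
    from that have d: "d \<in> edges Y" "d \<noteq> g" "src Y d \<in> verts Y" "(x, src Y d) \<in> (ulink Y {g})\<^sup>*"
      by (auto simp: subtree_simps)
    have "(src Y d, tgt Y d) \<in> ulink Y {g}" using ulink_edge[of d Y "{g}"] d by auto
    then have "(x, tgt Y d) \<in> (ulink Y {g})\<^sup>*" using d(4) by simp
    then have "d \<noteq> f" using d(4) z xz by auto
    then show ?thesis using d reach[OF d(4)] by (simp add: subtree_simps)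
  qed
  then have E: "edges (subtree ?Y1 g x) = edges (subtree Y g x)"
    using sub by (auto simp: subtree_simps)
  show ?thesis by (rule stree.equality) (simp_all only: V E subtree_simps(3-8))
qed

lemma subtree_out_edges:
  "{d \<in> edges (subtree Y f z). src (subtree Y f z) d = start (subtree Y f z)}
     = {d \<in> edges Y. d \<noteq> f \<and> src Y d = z}"
  if "z \<in> verts Y"
  using that by (auto simp: subtree_simps)

lemma subtree_in_edges:
  assumes Y: "is_tree Y"
  shows "{d \<in> edges (subtree Y f z). tgt (subtree Y f z) d = start (subtree Y f z)}
       = {d \<in> edges Y. d \<noteq> f \<and> tgt Y d = z}"
proof -
  have "(z, src Y d) \<in> (ulink Y {f})\<^sup>*" if "d \<in> edges Y" "d \<noteq> f" "tgt Y d = z" for d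
    using ulink_edge[of d Y "{f}"] that by auto
  then show ?thesis using is_treeD(3)[OF Y] by (auto simp: subtree_simps)
qed

lemma tau_subtree_unfold:
  assumes Y: "is_tree Y" and f: "f \<in> edges Y" and z: "z = src Y f \<or> z = tgt Y f"
  shows "tau chi (subtree Y f z) = set_prod (out_factor chi Y) {d \<in> edges Y. d \<noteq> f \<and> src Y d = z}
                                * set_prod (in_factor chi Y) {d \<in> edges Y. d \<noteq> f \<and> tgt Y d = z}"
proof -
  have zv: "z \<in> verts Y" using z is_treeD(3,4)[OF Y f] by auto
  have fin: "finite (edges Y)" using is_treeD(2)[OF Y] .
  have out: "out_factor chi (subtree Y f z) d = out_factor chi Y d"
    if "d \<in> edges Y" "d \<noteq> f" "src Y d = z" for d
    using subtree_subtree[OF Y that(1,2) z, of "tgt Y d"] that(3)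
    by (simp add: out_factor_def subtree_simps)
  have inn: "in_factor chi (subtree Y f z) d = in_factor chi Y d"
    if "d \<in> edges Y" "d \<noteq> f" "tgt Y d = z" for d
    using subtree_subtree[OF Y that(1,2) z, of "src Y d"] that(3)
    by (simp add: in_factor_def subtree_simps)
  show ?thesis
    unfolding tau_unfold[OF card_edges_subtree_less(1)[OF fin f]]
      subtree_out_edges[OF zv] subtree_in_edges[OF Y]
    using fin out inn by (intro arg_cong2[where f = "(*)"] set_prod_cong) simp_all
qed

section \<open>Rerooting at an edge and the main result\<close>

lemma tau_reroot_src:
  assumes Y: "is_tree Y" and f: "f \<in> edges Y"
  shows "tau chi (Y\<lparr>start := src Y f, fin := src Y f\<rparr>)
           = out_factor chi Y f * tau chi (subtree Y f (src Y f))"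
proof -
  let ?w = "src Y f"
  have fin: "finite (edges Y)" using is_treeD(2)[OF Y] .
  have "tgt Y f \<noteq> ?w" using tree_edge_bridge(3)[OF Y f] by simp
  then have O: "{d \<in> edges Y. src Y d = ?w} = insert f {d \<in> edges Y. d \<noteq> f \<and> src Y d = ?w}"
    and I: "{d \<in> edges Y. tgt Y d = ?w} = {d \<in> edges Y. d \<noteq> f \<and> tgt Y d = ?w}"
    using f by auto
  have "tau chi (Y\<lparr>start := ?w, fin := ?w\<rparr>)
      = set_prod (out_factor chi Y) (insert f {d \<in> edges Y. d \<noteq> f \<and> src Y d = ?w})
        * set_prod (in_factor chi Y) {d \<in> edges Y. d \<noteq> f \<and> tgt Y d = ?w}"
    using tau_unfold[of "Y\<lparr>start := ?w, fin := ?w\<rparr>" chi] fin O I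
    by (simp add: out_factor_reroot in_factor_reroot)
  also have "\<dots> = out_factor chi Y f * tau chi (subtree Y f ?w)"
    using set_prod_insert[of "out_factor chi Y", OF out_factor_idem] fin
      tau_subtree_unfold[OF Y f, of ?w chi] by (simp add: mult.assoc)
  finally show ?thesis .
qed

lemma tau_reroot_tgt:
  assumes Y: "is_tree Y" and f: "f \<in> edges Y"
  shows "tau chi (Y\<lparr>start := tgt Y f, fin := tgt Y f\<rparr>)
           = in_factor chi Y f * tau chi (subtree Y f (tgt Y f))"
proof -
  let ?w = "tgt Y f"
  let ?O = "set_prod (out_factor chi Y) {d \<in> edges Y. d \<noteq> f \<and> src Y d = ?w}"
  have comm: "?O * in_factor chi Y f = in_factor chi Y f * ?O"
    by (rule idem_commute[OF set_prod_idem[OF out_factor_idem] in_factor_idem])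
  have fin: "finite (edges Y)" using is_treeD(2)[OF Y] .
  have "src Y f \<noteq> ?w" using tree_edge_bridge(3)[OF Y f] .
  then have O: "{d \<in> edges Y. src Y d = ?w} = {d \<in> edges Y. d \<noteq> f \<and> src Y d = ?w}"
    and I: "{d \<in> edges Y. tgt Y d = ?w} = insert f {d \<in> edges Y. d \<noteq> f \<and> tgt Y d = ?w}"
    using f by auto
  have "tau chi (Y\<lparr>start := ?w, fin := ?w\<rparr>)
      = ?O * (in_factor chi Y f * set_prod (in_factor chi Y) {d \<in> edges Y. d \<noteq> f \<and> tgt Y d = ?w})"
    using tau_unfold[of "Y\<lparr>start := ?w, fin := ?w\<rparr>" chi] fin O I
      set_prod_insert[of "in_factor chi Y", OF in_factor_idem]
    by (simp add: out_factor_reroot in_factor_reroot)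
  also have "\<dots> = in_factor chi Y f * tau chi (subtree Y f ?w)"
    using comm tau_subtree_unfold[OF Y f, of ?w chi] by (simp add: mult.assoc[symmetric])
  finally show ?thesis .
qed

lemma reroot_at_start: "start Y = fin Y \<Longrightarrow> Y\<lparr>start := start Y, fin := start Y\<rparr> = Y"
  by (metis stree.surjective stree.update_convs(6,7))

lemma tau_mult_out_factor_absorb:
  fixes chi :: "'s \<Rightarrow> 'm::adequate_monoid"
  assumes Y: "idempotent_tree Y" and M: "tree_morphism mv me X Y"
    and e: "e \<in> edges X" "src X e = start X"
    and IH: "tau chi (Y\<lparr>start := mv (tgt X e), fin := mv (tgt X e)\<rparr>) * tau chi (subtree X e (tgt X e))
               = tau chi (Y\<lparr>start := mv (tgt X e), fin := mv (tgt X e)\<rparr>)"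
  shows "tau chi Y * out_factor chi X e = tau chi Y"
proof -
  let ?f = "me e"
  have f: "?f \<in> edges Y" "src Y ?f = start Y" "tgt Y ?f = mv (tgt X e)" "lab Y ?f = lab X e"
    using M e unfolding tree_morphism_def by auto
  have T: "is_tree Y" and Y_eq: "Y\<lparr>start := src Y ?f, fin := src Y ?f\<rparr> = Y"
    using Y f(2) reroot_at_start by (auto simp: idempotent_tree_def)
  show ?thesis
    using plus_factor_absorb[OF tau_idem tau_idem tau_idem, where a = "chi (lab X e)"]
      IH tau_reroot_src[OF T f(1), of chi] tau_reroot_tgt[OF T f(1), of chi]
    by (simp add: Y_eq f(3,4) out_factor_def in_factor_def)
qed

lemma tau_mult_in_factor_absorb:
  fixes chi :: "'s \<Rightarrow> 'm::adequate_monoid"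
  assumes Y: "idempotent_tree Y" and M: "tree_morphism mv me X Y"
    and e: "e \<in> edges X" "tgt X e = start X"
    and IH: "tau chi (Y\<lparr>start := mv (src X e), fin := mv (src X e)\<rparr>) * tau chi (subtree X e (src X e))
               = tau chi (Y\<lparr>start := mv (src X e), fin := mv (src X e)\<rparr>)"
  shows "tau chi Y * in_factor chi X e = tau chi Y"
proof -
  let ?f = "me e"
  have f: "?f \<in> edges Y" "tgt Y ?f = start Y" "src Y ?f = mv (src X e)" "lab Y ?f = lab X e"
    using M e unfolding tree_morphism_def by auto
  have T: "is_tree Y" and Y_eq: "Y\<lparr>start := tgt Y ?f, fin := tgt Y ?f\<rparr> = Y"
    using Y f(2) reroot_at_start by (auto simp: idempotent_tree_def)
  show ?thesis
    using star_factor_absorb[OF tau_idem tau_idem, where a = "chi (lab X e)"]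
      IH tau_reroot_src[OF T f(1), of chi] tau_reroot_tgt[OF T f(1), of chi]
    by (simp add: Y_eq f(3,4) out_factor_def in_factor_def)
qed

theorem lemma5p8:
  fixes chi :: "'s \<Rightarrow> 'm::adequate_monoid"
    and X :: "('v1, 'e1, 's) stree" and Y :: "('v2, 'e2, 's) stree"
    and mv :: "'v1 \<Rightarrow> 'v2" and me :: "'e1 \<Rightarrow> 'e2"
  assumes "idempotent_tree X" and "idempotent_tree Y"
    and "tree_morphism mv me X Y"
  shows "tau chi Y * tau chi X = tau chi Y"
  using assms
proof (induction "card (edges X)" arbitrary: X Y rule: less_induct)
  case less
  have X: "is_tree X" using less.prems(1) by (simp add: idempotent_tree_def)
  have fin: "finite (edges X)" using is_treeD(2)[OF X] .
  have IH: "tau chi (Y\<lparr>start := mv u, fin := mv u\<rparr>) * tau chi (subtree X e u)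
              = tau chi (Y\<lparr>start := mv u, fin := mv u\<rparr>)" if "e \<in> edges X" "u \<in> verts X" for e u
  proof (rule less.hyps)
    show "card (edges (subtree X e u)) < card (edges X)" by (rule card_edges_subtree_less(2)[OF fin that(1)])
    show "idempotent_tree (subtree X e u)" by (rule idempotent_tree_subtree[OF X that])
    show "idempotent_tree (Y\<lparr>start := mv u, fin := mv u\<rparr>)"
      using less.prems that(2) by (intro idempotent_tree_reroot) (auto simp: idempotent_tree_def tree_morphism_def)
    show "tree_morphism mv me (subtree X e u) (Y\<lparr>start := mv u, fin := mv u\<rparr>)"
      by (rule tree_morphism_subtree_reroot[OF less.prems(3) that(2)])
  qed
  have "tau chi Y * set_prod (out_factor chi X) {d \<in> edges X. src X d = start X} = tau chi Y"
    using fin IH is_treeD(4)[OF X] by (intro set_prod_absorb tau_mult_out_factor_absorb[OF less.prems(2,3)]) auto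
  moreover have "tau chi Y * set_prod (in_factor chi X) {d \<in> edges X. tgt X d = start X} = tau chi Y"
    using fin IH is_treeD(3)[OF X] by (intro set_prod_absorb tau_mult_in_factor_absorb[OF less.prems(2,3)]) auto
  ultimately show ?case by (simp add: tau_unfold[OF fin] mult.assoc[symmetric])
qed

end
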